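(* Let $0<R\le\infty$ and let $\psi$ be a quasiconcave function on $[0,R)$. Then: (i) $T_\psi$ is bounded from $L^1(0,R)$ to $L^1(0,R)$ if and only if $\psi$ satisfies the $B$-condition; (ii) $T_\psi$ is bounded from $M_\psi(0,R)$ to $M_\psi(0,R)$ if and only if $\psi$ satisfies the $B$-condition.
   Context: For a measurable a.e. finite function $f$ on $(0,R)$, $f^*$ is its non-increasing rearrangement, $f^*(t)=\inf\{\lambda>0: |\{x:|f(x)|>\lambda\}|\le t\}$, and $f^{**}(t)=\frac1t\int_0^t f^*(s)\,ds$. A function $\psi\colon[0,R)\to[0,\infty)$ is quasiconcave if $\psi(t)=0$ iff $t=0$, $\psi$ is non-decreasing, and $\psi(t)/t$ is non-increasing on $(0,R)$. It satisfies the $B$-condition if there is $C>0$ with $\frac1t\int_0^t \frac{ds}{\psi(s)}\le \frac{C}{\psi(t)}$ for all $t\in(0,R)$. $T_\psi f(t)=\frac{1}{\psi(t)}\sup_{t<s<R}\psi(s)f^*(s)$, $t\in(0,R)$. $M_\psi(0,R)$ is the set of $f$ with $\|f\|_{M_\psi}=\sup_{0<s<R}\psi(s)f^{**}(s)<\infty$. *)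

theory Defs
  imports "HOL-Analysis.Analysis"
begin

definition ivl :: "ereal \<Rightarrow> real set" where
  "ivl R = {x. 0 < x \<and> ereal x < R}"

definition distf :: "ereal \<Rightarrow> (real \<Rightarrow> ennreal) \<Rightarrow> ennreal \<Rightarrow> ennreal" where
  "distf R g lam = emeasure lebesgue {x \<in> ivl R. g x > lam}"

definition rearr :: "ereal \<Rightarrow> (real \<Rightarrow> ennreal) \<Rightarrow> real \<Rightarrow> ennreal" where
  "rearr R g t = Inf {lam. 0 < lam \<and> distf R g lam \<le> ennreal t}"

definition dblstar :: "ereal \<Rightarrow> (real \<Rightarrow> ennreal) \<Rightarrow> real \<Rightarrow> ennreal" where
  "dblstar R g t = ennreal (1 / t) * (\<integral>\<^sup>+ s \<in> {0<..<t}. rearr R g s \<partial>lborel)"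

definition quasiconcave_fn :: "ereal \<Rightarrow> (real \<Rightarrow> real) \<Rightarrow> bool" where
  "quasiconcave_fn R psi \<longleftrightarrow>
     (\<forall>t. 0 \<le> t \<and> ereal t < R \<longrightarrow> 0 \<le> psi t \<and> (psi t = 0 \<longleftrightarrow> t = 0)) \<and>
     (\<forall>s t. 0 \<le> s \<and> s \<le> t \<and> ereal t < R \<longrightarrow> psi s \<le> psi t) \<and>
     (\<forall>s t. 0 < s \<and> s \<le> t \<and> ereal t < R \<longrightarrow> psi t / t \<le> psi s / s)"

definition B_condition :: "ereal \<Rightarrow> (real \<Rightarrow> real) \<Rightarrow> bool" where
  "B_condition R psi \<longleftrightarrow> (\<exists>C>0. \<forall>t \<in> ivl R.
     ennreal (1 / t) * (\<integral>\<^sup>+ s \<in> {0<..<t}. ennreal (1 / psi s) \<partial>lborel) \<le> ennreal (C / psi t))"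

definition Tpsi :: "(real \<Rightarrow> real) \<Rightarrow> ereal \<Rightarrow> (real \<Rightarrow> ennreal) \<Rightarrow> real \<Rightarrow> ennreal" where
  "Tpsi psi R g t = (SUP s \<in> {s. t < s \<and> ereal s < R}. ennreal (psi s) * rearr R g s) / ennreal (psi t)"

definition L1norm :: "ereal \<Rightarrow> (real \<Rightarrow> ennreal) \<Rightarrow> ennreal" where
  "L1norm R g = (\<integral>\<^sup>+ x \<in> ivl R. g x \<partial>lebesgue)"

definition Mnorm :: "(real \<Rightarrow> real) \<Rightarrow> ereal \<Rightarrow> (real \<Rightarrow> ennreal) \<Rightarrow> ennreal" where
  "Mnorm psi R g = (SUP s \<in> ivl R. ennreal (psi s) * dblstar R g s)"

end

theory Submission
  imports Defs
begin

text \<open>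
  Sufficiency on M_psi: T_psi f is non-increasing and at most ||f||_M / psi, so the same holds
  for its rearrangement, and the B-condition bounds psi(t) (T_psi f)**(t) by C ||f||_M.

  Sufficiency on L^1: let lambda be the distribution function of f.  The layer-cake bound
  f*(s) <= |{y > 0. s < lambda(y)}| gives
  T_psi f(t) <= psi(t)^-1 * (integral over {y. t < lambda(y)} of psi(lambda(y)-) dy).
  Integrating in t and exchanging the integrals leaves the integral over y > 0 of
  psi(lambda(y)-) * (integral from 0 to lambda(y) of 1/psi).  For every u < lambda(y), psi(u)
  times that inner integral is at most C u + (lambda(y) - u): the B-condition handles (0,u),
  monotonicity of psi the rest.  Finally the integral of lambda over y > 0 is ||f||_1.

  Necessity: test the bound on the indicator chi of (0,b) with a < b <= 2a.  Then
  T_psi chi(t) >= psi(a)/psi(t) for t < a, while quasiconcavity gives psi(b) <= 2 psi(a) and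
  (T_psi chi)*(s) >= psi(a)/(2 psi(s)); either operator bound becomes
  psi(a) * (integral from 0 to a of 1/psi) <= C a, which is the B-condition.
\<close>

section \<open>Quasiconcave functions on the interval (0,R)\<close>

lemma quasiconcave_fn_pos: "quasiconcave_fn R psi \<Longrightarrow> t \<in> ivl R \<Longrightarrow> 0 < psi t"
  unfolding quasiconcave_fn_def ivl_def by (metis less_eq_real_def mem_Collect_eq)

lemma quasiconcave_fn_mono:
  "quasiconcave_fn R psi \<Longrightarrow> t \<in> ivl R \<Longrightarrow> 0 < s \<Longrightarrow> s \<le> t \<Longrightarrow> psi s \<le> psi t"
  unfolding quasiconcave_fn_def ivl_def by auto

lemma quasiconcave_fn_ratio:
  assumes "quasiconcave_fn R psi" "t \<in> ivl R" "0 < s" "s \<le> t"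
  shows "psi t * s \<le> psi s * t"
proof -
  have "psi t / t \<le> psi s / s" using assms unfolding quasiconcave_fn_def ivl_def by auto
  then show ?thesis using assms(3,4) by (simp add: divide_simps mult.commute)
qed

lemma ivl_downward_closed: "t \<in> ivl R \<Longrightarrow> 0 < s \<Longrightarrow> s \<le> t \<Longrightarrow> s \<in> ivl R"
  unfolding ivl_def by (auto intro: order_le_less_trans[of "ereal s" "ereal t"])

lemma greaterThanLessThan_subset_ivl: "t \<in> ivl R \<Longrightarrow> {0<..<t} \<subseteq> ivl R"
  by (auto intro: ivl_downward_closed)

lemma ivl_doubling_point:
  assumes "a \<in> ivl R"
  obtains b where "b \<in> ivl R" "a < b" "b \<le> 2 * a"
proof -
  have "ereal a < min (ereal (2 * a)) R" using assms by (auto simp: ivl_def)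
  from ereal_dense2[OF this] obtain b where "ereal a < ereal b" "ereal b < min (ereal (2 * a)) R"
    by blast
  with assms show ?thesis by (intro that) (auto simp: ivl_def)
qed

lemma B_condition_iff:
  assumes q: "quasiconcave_fn R psi"
  shows "B_condition R psi \<longleftrightarrow> (\<exists>C>0. \<forall>a\<in>ivl R.
    ennreal (psi a) * (\<integral>\<^sup>+ s\<in>{0<..<a}. ennreal (1 / psi s) \<partial>lborel) \<le> ennreal (C * a))"
proof -
  have "ennreal (1 / a) * X \<le> ennreal (C / psi a) \<longleftrightarrow> ennreal (psi a) * X \<le> ennreal (C * a)"
    if a: "a \<in> ivl R" and C: "0 < C" for a C X
  proof -
    have pos: "0 < a" "0 < psi a" using a quasiconcave_fn_pos[OF q a] by (auto simp: ivl_def)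
    let ?c = "ennreal (a * psi a)"
    have "?c * (ennreal (1 / a) * X) = ennreal (psi a) * X"
      using pos by (simp add: mult.assoc[symmetric] ennreal_mult'[symmetric])
    moreover have "?c * ennreal (C / psi a) = ennreal (C * a)"
      using pos C by (simp add: ennreal_mult'[symmetric])
    moreover have "?c \<noteq> 0" "?c \<noteq> top" using pos by auto
    ultimately show ?thesis using ennreal_mult_le_mult_iff[of ?c] by metis
  qed
  then show ?thesis unfolding B_condition_def by (meson order_less_imp_le)
qed

section \<open>Measurability\<close>

lemma downward_closed_borel:
  fixes S :: "real set"
  assumes dc: "\<And>x y. x \<in> S \<Longrightarrow> y \<le> x \<Longrightarrow> y \<in> S"
  shows "S \<in> sets borel"
proof (cases "bdd_above S \<and> S \<noteq> {}")
  case True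
  define c where "c = Sup S"
  have "S = {..<c} \<union> (S \<inter> {c})"
  proof (intro set_eqI iffI)
    fix x assume "x \<in> S"
    then have "x \<le> c" using True c_def by (simp add: cSup_upper)
    then show "x \<in> {..<c} \<union> (S \<inter> {c})" using \<open>x \<in> S\<close> by auto
  next
    fix x assume "x \<in> {..<c} \<union> (S \<inter> {c})"
    then show "x \<in> S"
    proof
      assume "x \<in> {..<c}"
      then obtain y where "y \<in> S" "x < y" using True c_def by (metis lessThan_iff less_cSupE)
      then show ?thesis using dc by auto
    qed auto
  qed
  moreover have "S \<inter> {c} \<in> sets borel" by (cases "c \<in> S") auto
  ultimately show ?thesis by (metis sets.Un borel_open open_lessThan)
next
  case False
  then consider "S = {}" | "\<not> bdd_above S" by blast
  then show ?thesis
  proof cases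
    case 2
    have "x \<in> S" for x
    proof -
      obtain y where "y \<in> S" "x \<le> y" using 2 unfolding bdd_above_def by (meson linear)
      then show "x \<in> S" using dc by auto
    qed
    then have "S = UNIV" by auto
    then show ?thesis by simp
  qed simp
qed

lemma borel_measurable_antitone:
  fixes f :: "real \<Rightarrow> 'b::{linorder_topology, second_countable_topology}"
  assumes "\<And>x y. x \<le> y \<Longrightarrow> f y \<le> f x"
  shows "f \<in> borel_measurable borel"
proof (rule borel_measurableI_greater)
  fix a
  have "{x. a < f x} \<in> sets borel"
    by (rule downward_closed_borel) (metis assms mem_Collect_eq order_less_le_trans)
  then show "{x \<in> space borel. a < f x} \<in> sets borel" by simp
qed

lemma sets_ivl_borel [measurable]: "ivl R \<in> sets borel"
proof -
  have "{x. ereal x < R} \<in> sets borel"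
    by (rule downward_closed_borel) (auto intro: order_le_less_trans[of "ereal _" "ereal _"])
  moreover have "ivl R = {0<..} \<inter> {x. ereal x < R}" unfolding ivl_def by auto
  ultimately show ?thesis by auto
qed

lemma sets_ivl_lebesgue [measurable]: "ivl R \<in> sets lebesgue"
  by simp

lemma sets_superlevel_antitone:
  fixes g :: "real \<Rightarrow> 'a::order"
  assumes anti: "\<And>x y. x \<in> ivl R \<Longrightarrow> y \<in> ivl R \<Longrightarrow> x \<le> y \<Longrightarrow> g y \<le> g x"
  shows "{x \<in> ivl R. lam < g x} \<in> sets borel"
proof -
  define D where "D = {x. x \<le> 0 \<or> (x \<in> ivl R \<and> lam < g x)}"
  have "D \<in> sets borel"
  proof (rule downward_closed_borel)
    fix x y assume "x \<in> D" "y \<le> x"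
    show "y \<in> D"
    proof (cases "y \<le> 0")
      case False
      then have x: "x \<in> ivl R" "lam < g x" using \<open>x \<in> D\<close> \<open>y \<le> x\<close> by (auto simp: D_def)
      then have "y \<in> ivl R" using \<open>y \<le> x\<close> False by (auto intro: ivl_downward_closed)
      moreover have "lam < g y" using x(2) anti[OF \<open>y \<in> ivl R\<close> x(1) \<open>y \<le> x\<close>]
        by (rule order_less_le_trans)
      ultimately show ?thesis by (simp add: D_def)
    qed (auto simp: D_def)
  qed
  moreover have "{x \<in> ivl R. lam < g x} = D \<inter> {0<..}" by (auto simp: D_def ivl_def)
  ultimately show ?thesis by auto
qed

lemma borel_measurable_inverse_quasiconcave:
  assumes q: "quasiconcave_fn R psi" and A: "A \<subseteq> ivl R" "A \<in> sets borel"
  shows "(\<lambda>t. ennreal (1 / psi t) * indicator A t) \<in> borel_measurable borel"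
proof -
  \<comment> \<open>Extend \<open>1/psi\<close> from \<open>ivl R\<close> to an antitone function on the whole line.\<close>
  define h where "h t = (if t \<le> 0 then \<infinity> else if ereal t < R then ennreal (1 / psi t) else 0)" for t
  have "h y \<le> h x" if "x \<le> y" for x y
  proof (cases "0 < x \<and> ereal y < R")
    case True
    then have "y \<in> ivl R" using that by (auto simp: ivl_def)
    then have "x \<in> ivl R" using True that by (auto intro: ivl_downward_closed)
    then have "psi x \<le> psi y" "0 < psi x"
      using q that True \<open>y \<in> ivl R\<close> by (auto intro: quasiconcave_fn_mono quasiconcave_fn_pos)
    then have "1 / psi y \<le> 1 / psi x" by (simp add: frac_le)
    then show ?thesis using \<open>x \<in> ivl R\<close> \<open>y \<in> ivl R\<close> by (auto simp: h_def ivl_def intro: ennreal_leI)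
  qed (use that in \<open>auto simp: h_def\<close>)
  then have "h \<in> borel_measurable borel" by (rule borel_measurable_antitone)
  moreover have "ennreal (1 / psi t) * indicator A t = h t * indicator A t" for t
    using A by (auto simp: h_def ivl_def indicator_def)
  ultimately show ?thesis using A by simp
qed

lemma emeasure_lebesgue_borel: "A \<in> sets borel \<Longrightarrow> emeasure lebesgue A = emeasure lborel A"
  by simp

lemma sigma_finite_lebesgue: "sigma_finite_measure (lebesgue :: 'a::euclidean_space measure)"
proof
  obtain A :: "'a set set" where A: "countable A" "A \<subseteq> sets lborel" "\<Union> A = space lborel"
    "\<forall>a\<in>A. emeasure lborel a \<noteq> \<infinity>"
    using lborel.sigma_finite_countable by blast
  then show "\<exists>A. countable A \<and> A \<subseteq> sets (lebesgue :: 'a measure) \<and> \<Union> A = space lebesgue \<and>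
      (\<forall>a\<in>A. emeasure lebesgue a \<noteq> \<infinity>)"
    by (intro exI[of _ A]) (auto simp: emeasure_lebesgue_borel)
qed

section \<open>Distribution function and non-increasing rearrangement\<close>

lemma rearr_antitone: "u \<le> s \<Longrightarrow> rearr R g s \<le> rearr R g u"
  unfolding rearr_def by (rule Inf_superset_mono) (auto intro: order_trans ennreal_leI)

lemma le_rearrI:
  assumes "\<And>lam. 0 < lam \<Longrightarrow> lam < v \<Longrightarrow> ennreal s < distf R g lam"
  shows "v \<le> rearr R g s"
  unfolding rearr_def using assms by (auto intro!: Inf_greatest simp: not_le[symmetric])

lemma rearr_le_dblstar:
  assumes s: "0 < s"
  shows "rearr R g s \<le> dblstar R g s"
proof -
  have "rearr R g s * ennreal s = (\<integral>\<^sup>+ u. rearr R g s * indicator {0<..<s} u \<partial>lborel)"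
    using s by (simp add: nn_integral_cmult_indicator)
  also have "\<dots> \<le> (\<integral>\<^sup>+ u\<in>{0<..<s}. rearr R g u \<partial>lborel)"
    by (intro nn_integral_mono) (auto simp: indicator_def intro: rearr_antitone)
  finally have "ennreal (1 / s) * (rearr R g s * ennreal s) \<le> dblstar R g s"
    unfolding dblstar_def by (intro mult_left_mono) auto
  moreover have "ennreal (1 / s) * ennreal s = 1" using s by (simp flip: ennreal_mult)
  then have "ennreal (1 / s) * (rearr R g s * ennreal s) = rearr R g s"
    by (metis mult.commute mult.left_commute mult_1_right)
  ultimately show ?thesis by simp
qed

lemma rearr_le_of_antitone:
  assumes anti: "\<And>x y. x \<in> ivl R \<Longrightarrow> y \<in> ivl R \<Longrightarrow> x \<le> y \<Longrightarrow> g y \<le> g x"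
    and t: "t \<in> ivl R"
  shows "rearr R g t \<le> g t"
proof (rule dense_ge)
  fix lam assume lam: "g t < lam"
  have "{x \<in> ivl R. lam < g x} \<subseteq> {0<..<t}"
    using anti[OF t] lam by (force simp: ivl_def dest: order_le_less_trans)
  then have "distf R g lam \<le> emeasure lebesgue {0<..<t}"
    unfolding distf_def by (rule emeasure_mono) simp
  also have "\<dots> = ennreal t" using t by (simp add: emeasure_lebesgue_borel ivl_def)
  finally have "lam \<in> {lam. 0 < lam \<and> distf R g lam \<le> ennreal t}"
    using lam by (simp add: order_le_less_trans[OF zero_le])
  then show "rearr R g t \<le> lam" unfolding rearr_def by (rule Inf_lower)
qed

lemma le_rearr_of_antitone:
  assumes anti: "\<And>x y. x \<in> ivl R \<Longrightarrow> y \<in> ivl R \<Longrightarrow> x \<le> y \<Longrightarrow> g y \<le> g x"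
    and t: "t \<in> ivl R" and s: "s < t"
  shows "g t \<le> rearr R g s"
proof (rule le_rearrI)
  fix lam assume "0 < lam" "lam < g t"
  have t0: "0 < t" using t by (simp add: ivl_def)
  have "{0<..t} \<subseteq> {x \<in> ivl R. lam < g x}"
  proof
    fix x assume "x \<in> {0<..t}"
    then have x: "x \<in> ivl R" using t by (auto intro: ivl_downward_closed)
    have "lam < g x" using \<open>lam < g t\<close> anti[OF x t] \<open>x \<in> {0<..t}\<close> by auto
    with x show "x \<in> {x \<in> ivl R. lam < g x}" by simp
  qed
  then have "emeasure lebesgue {0<..t} \<le> distf R g lam"
    unfolding distf_def by (rule emeasure_mono) (use sets_superlevel_antitone[OF anti] in simp)
  moreover have "ennreal s < ennreal t" using s t0 by (simp add: ennreal_lessI)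
  ultimately show "ennreal s < distf R g lam"
    using t0 by (simp add: emeasure_lebesgue_borel)
qed

lemma distf_antitone:
  assumes "g \<in> borel_measurable lebesgue" "lam \<le> mu"
  shows "distf R g mu \<le> distf R g lam"
  unfolding distf_def
proof (rule emeasure_mono)
  show "{x \<in> ivl R. mu < g x} \<subseteq> {x \<in> ivl R. lam < g x}" using assms(2) by auto
  have "{x \<in> ivl R. lam < g x} = ivl R \<inter> {x \<in> space lebesgue. lam < g x}" by auto
  also have "\<dots> \<in> sets lebesgue" using assms(1) by measurable
  finally show "{x \<in> ivl R. lam < g x} \<in> sets lebesgue" .
qed

lemma borel_measurable_distf [measurable]:
  "g \<in> borel_measurable lebesgue \<Longrightarrow> (\<lambda>y. distf R g (ennreal y)) \<in> borel_measurable borel"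
  by (rule borel_measurable_antitone) (auto intro: distf_antitone ennreal_leI)

lemma rearr_le_level_integral:
  "rearr R g s \<le> (\<integral>\<^sup>+ y. indicator {y. 0 < y \<and> ennreal s < distf R g (ennreal y)} y \<partial>lborel)"
proof (rule dense_le)
  fix z assume z: "z < rearr R g s"
  then obtain r where r: "z = ennreal r" "0 \<le> r" by (cases z) auto
  have "indicator {0<..<r} y \<le> (indicator {y. 0 < y \<and> ennreal s < distf R g (ennreal y)} y :: ennreal)"
    for y
  proof (cases "y \<in> {0<..<r}")
    case True
    have "ennreal s < distf R g (ennreal y)"
    proof (rule ccontr)
      assume "\<not> ennreal s < distf R g (ennreal y)"
      then have "rearr R g s \<le> ennreal y"
        unfolding rearr_def using True by (intro Inf_lower) (simp add: not_less)
      moreover have "ennreal y < z" using True r by (auto simp: ennreal_lessI)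
      ultimately show False using z by simp
    qed
    then show ?thesis using True by simp
  qed simp
  then have "(\<integral>\<^sup>+ y. indicator {0<..<r} y \<partial>lborel) \<le>
      (\<integral>\<^sup>+ y. indicator {y. 0 < y \<and> ennreal s < distf R g (ennreal y)} y \<partial>lborel)"
    by (intro nn_integral_mono)
  then show "z \<le> \<dots>" using r by simp
qed

lemma nn_integral_indicator_level: "(\<integral>\<^sup>+ y. indicator {y. 0 < y \<and> ennreal y < c} y \<partial>lborel) = c"
proof (rule antisym)
  show "(\<integral>\<^sup>+ y. indicator {y. 0 < y \<and> ennreal y < c} y \<partial>lborel) \<le> c"
  proof (cases c rule: ennreal_cases)
    case (real r)
    then have "(\<integral>\<^sup>+ y. indicator {y. 0 < y \<and> ennreal y < c} y \<partial>lborel) \<le> (\<integral>\<^sup>+ y. indicator {0<..<r} y \<partial>lborel)"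
      by (intro nn_integral_mono) (auto simp: indicator_def ennreal_less_iff)
    with real show ?thesis by simp
  qed simp
next
  show "c \<le> (\<integral>\<^sup>+ y. indicator {y. 0 < y \<and> ennreal y < c} y \<partial>lborel)"
  proof (rule dense_le)
    fix z assume "z < c"
    then obtain r where r: "z = ennreal r" "0 \<le> r" by (cases z) auto
    have "ennreal y < c" if "0 < y" "y < r" for y
    proof -
      have "ennreal y < ennreal r" using that by (intro ennreal_lessI) auto
      with \<open>z < c\<close> r show ?thesis by simp
    qed
    then have "(\<integral>\<^sup>+ y. indicator {0<..<r} y \<partial>lborel) \<le> (\<integral>\<^sup>+ y. indicator {y. 0 < y \<and> ennreal y < c} y \<partial>lborel)"
      by (intro nn_integral_mono) (auto simp: indicator_def)
    with r show "z \<le> \<dots>" by simp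
  qed
qed

lemma L1norm_eq_distf_integral:
  assumes g[measurable]: "g \<in> borel_measurable lebesgue"
  shows "L1norm R g = (\<integral>\<^sup>+ y\<in>{0<..}. distf R g (ennreal y) \<partial>lborel)"
proof -
  interpret L: sigma_finite_measure "lebesgue :: real measure" by (rule sigma_finite_lebesgue)
  interpret P: pair_sigma_finite "lebesgue :: real measure" lborel ..
  define H where "H x y = (indicator (ivl R) x * of_bool (0 < y \<and> ennreal y < g x) :: ennreal)" for x y
  have [measurable]: "case_prod H \<in> borel_measurable (lebesgue \<Otimes>\<^sub>M lborel)"
    unfolding H_def by measurable
  have inner: "(\<integral>\<^sup>+ y. H x y \<partial>lborel) = indicator (ivl R) x * g x" for x
  proof -
    have "(\<integral>\<^sup>+ y. H x y \<partial>lborel)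
        = indicator (ivl R) x * (\<integral>\<^sup>+ y. of_bool (0 < y \<and> ennreal y < g x) \<partial>lborel)"
      unfolding H_def by (rule nn_integral_cmult) measurable
    also have "(\<integral>\<^sup>+ y. of_bool (0 < y \<and> ennreal y < g x) \<partial>lborel) = g x"
      using nn_integral_indicator_level[of "g x"] by (simp add: indicator_def)
    finally show ?thesis .
  qed
  have "L1norm R g = (\<integral>\<^sup>+ x. (\<integral>\<^sup>+ y. H x y \<partial>lborel) \<partial>lebesgue)"
    unfolding L1norm_def inner by (simp add: mult.commute)
  also have "\<dots> = (\<integral>\<^sup>+ y. (\<integral>\<^sup>+ x. H x y \<partial>lebesgue) \<partial>lborel)"
    by (rule P.Fubini'[symmetric]) measurable
  also have "\<dots> = (\<integral>\<^sup>+ y\<in>{0<..}. distf R g (ennreal y) \<partial>lborel)"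
  proof (intro nn_integral_cong)
    fix y :: real
    have "{x \<in> ivl R. ennreal y < g x} = ivl R \<inter> {x \<in> space lebesgue. ennreal y < g x}" by auto
    also have "\<dots> \<in> sets lebesgue" by measurable
    finally have S: "{x \<in> ivl R. ennreal y < g x} \<in> sets lebesgue" .
    have "(\<integral>\<^sup>+ x. H x y \<partial>lebesgue)
        = indicator {0<..} y * (\<integral>\<^sup>+ x. indicator {x \<in> ivl R. ennreal y < g x} x \<partial>lebesgue)"
      by (cases "0 < y") (auto simp: H_def indicator_def intro!: nn_integral_cong)
    also have "\<dots> = indicator {0<..} y * distf R g (ennreal y)"
      by (simp only: distf_def nn_integral_indicator[OF S])
    finally show "(\<integral>\<^sup>+ x. H x y \<partial>lebesgue) = distf R g (ennreal y) * indicator {0<..} y"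
      by (simp add: mult.commute)
  qed
  finally show ?thesis .
qed

section \<open>The operator T_psi\<close>

lemma Tpsi_eq:
  assumes "quasiconcave_fn R psi" "t \<in> ivl R"
  shows "Tpsi psi R g t =
    ennreal (1 / psi t) * (SUP s \<in> {s. t < s \<and> ereal s < R}. ennreal (psi s) * rearr R g s)"
  using quasiconcave_fn_pos[OF assms]
  by (simp add: Tpsi_def divide_ennreal_def inverse_ennreal inverse_eq_divide mult.commute)

lemma Tpsi_antitone:
  assumes q: "quasiconcave_fn R psi" and xy: "x \<in> ivl R" "y \<in> ivl R" "x \<le> y"
  shows "Tpsi psi R g y \<le> Tpsi psi R g x"
proof -
  have "psi x \<le> psi y" "0 < psi x"
    using xy by (auto simp: ivl_def intro: quasiconcave_fn_mono[OF q] quasiconcave_fn_pos[OF q])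
  then have "1 / psi y \<le> 1 / psi x" by (simp add: frac_le)
  moreover have "(SUP s \<in> {s. y < s \<and> ereal s < R}. ennreal (psi s) * rearr R g s)
      \<le> (SUP s \<in> {s. x < s \<and> ereal s < R}. ennreal (psi s) * rearr R g s)"
    using xy by (intro SUP_subset_mono) auto
  ultimately show ?thesis unfolding Tpsi_eq[OF q xy(1)] Tpsi_eq[OF q xy(2)]
    by (intro mult_mono ennreal_leI) auto
qed

lemma Tpsi_le_Mnorm:
  assumes q: "quasiconcave_fn R psi" and t: "t \<in> ivl R"
  shows "Tpsi psi R g t \<le> ennreal (1 / psi t) * Mnorm psi R g"
  unfolding Tpsi_eq[OF q t]
proof (intro mult_left_mono SUP_least)
  fix s assume "s \<in> {s. t < s \<and> ereal s < R}"
  then have s: "s \<in> ivl R" using t by (auto simp: ivl_def)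
  then have "ennreal (psi s) * rearr R g s \<le> ennreal (psi s) * dblstar R g s"
    by (intro mult_left_mono rearr_le_dblstar) (auto simp: ivl_def)
  also have "\<dots> \<le> Mnorm psi R g" unfolding Mnorm_def using s by (rule SUP_upper)
  finally show "ennreal (psi s) * rearr R g s \<le> Mnorm psi R g" .
qed simp

section \<open>Sufficiency of the B-condition\<close>

lemma Mnorm_Tpsi_le:
  assumes q: "quasiconcave_fn R psi" and B: "B_condition R psi"
  obtains C where "\<And>g. Mnorm psi R (Tpsi psi R g) \<le> ennreal C * Mnorm psi R g"
proof -
  obtain C where C: "0 < C" and CB: "\<And>t. t \<in> ivl R \<Longrightarrow>
      ennreal (1 / t) * (\<integral>\<^sup>+ s\<in>{0<..<t}. ennreal (1 / psi s) \<partial>lborel) \<le> ennreal (C / psi t)"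
    using B unfolding B_condition_def by blast
  have "Mnorm psi R (Tpsi psi R g) \<le> ennreal C * Mnorm psi R g" for g
    unfolding Mnorm_def[of psi R "Tpsi psi R g"]
  proof (rule SUP_least)
    fix t assume t: "t \<in> ivl R"
    let ?M = "Mnorm psi R g" and ?T = "Tpsi psi R g"
    let ?I = "\<integral>\<^sup>+ s\<in>{0<..<t}. ennreal (1 / psi s) \<partial>lborel"
    have anti: "\<And>x y. x \<in> ivl R \<Longrightarrow> y \<in> ivl R \<Longrightarrow> x \<le> y \<Longrightarrow> ?T y \<le> ?T x"
      by (rule Tpsi_antitone[OF q])
    have "(\<integral>\<^sup>+ s\<in>{0<..<t}. rearr R ?T s \<partial>lborel) \<le> (\<integral>\<^sup>+ s. ?M * (ennreal (1 / psi s) * indicator {0<..<t} s) \<partial>lborel)"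
    proof (intro nn_integral_mono)
      fix s
      show "rearr R ?T s * indicator {0<..<t} s \<le> ?M * (ennreal (1 / psi s) * indicator {0<..<t} s)"
      proof (cases "s \<in> {0<..<t}")
        case True
        then have s: "s \<in> ivl R" using greaterThanLessThan_subset_ivl[OF t] by auto
        have "rearr R ?T s \<le> ?T s" by (rule rearr_le_of_antitone[OF anti s])
        also have "\<dots> \<le> ennreal (1 / psi s) * ?M" by (rule Tpsi_le_Mnorm[OF q s])
        finally show ?thesis using True by (simp add: mult.commute)
      qed simp
    qed
    also have "\<dots> = ?M * ?I"
      using borel_measurable_inverse_quasiconcave[OF q greaterThanLessThan_subset_ivl[OF t]]
      by (simp add: nn_integral_cmult)
    finally have "ennreal (psi t) * dblstar R ?T t \<le> ennreal (psi t) * (ennreal (1 / t) * (?M * ?I))"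
      unfolding dblstar_def by (intro mult_left_mono) auto
    also have "\<dots> = ?M * (ennreal (psi t) * (ennreal (1 / t) * ?I))" by (simp add: ac_simps)
    also have "\<dots> \<le> ?M * (ennreal (psi t) * ennreal (C / psi t))"
      by (intro mult_left_mono CB[OF t]) auto
    also have "ennreal (psi t) * ennreal (C / psi t) = ennreal C"
      using quasiconcave_fn_pos[OF q t] C by (simp flip: ennreal_mult)
    finally show "ennreal (psi t) * dblstar R ?T t \<le> ennreal C * ?M" by (simp add: mult.commute)
  qed
  then show ?thesis by (rule that)
qed

text \<open>\<open>psi_sup_below psi R \<delta>\<close> is the left limit \<open>psi(\<delta>-)\<close> when \<open>0 < \<delta> \<le> R\<close>.\<close>
definition psi_sup_below :: "(real \<Rightarrow> real) \<Rightarrow> ereal \<Rightarrow> ennreal \<Rightarrow> ennreal" where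
  "psi_sup_below psi R \<delta> = (SUP u \<in> {u \<in> ivl R. ennreal u < \<delta>}. ennreal (psi u))"

lemma psi_sup_below_mono: "\<delta> \<le> \<epsilon> \<Longrightarrow> psi_sup_below psi R \<delta> \<le> psi_sup_below psi R \<epsilon>"
  unfolding psi_sup_below_def by (rule SUP_subset_mono) auto

lemma integral_inverse_psi_tail_le:
  assumes q: "quasiconcave_fn R psi" and u: "u \<in> ivl R" "u < r"
  shows "ennreal (psi u) * (\<integral>\<^sup>+ t\<in>{t \<in> ivl R. u \<le> t \<and> t < r}. ennreal (1 / psi t) \<partial>lborel)
    \<le> ennreal (r - u)"
proof -
  let ?S = "{t \<in> ivl R. u \<le> t \<and> t < r}"
  have "?S = ivl R \<inter> {u..<r}" by auto
  then have S: "?S \<subseteq> ivl R" "?S \<in> sets borel" by auto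
  have "ennreal (psi u) * (\<integral>\<^sup>+ t\<in>?S. ennreal (1 / psi t) \<partial>lborel)
      = (\<integral>\<^sup>+ t. ennreal (psi u) * (ennreal (1 / psi t) * indicator ?S t) \<partial>lborel)"
    by (rule nn_integral_cmult[symmetric]) (use borel_measurable_inverse_quasiconcave[OF q S] in simp)
  also have "\<dots> \<le> (\<integral>\<^sup>+ t. indicator {u..<r} t \<partial>lborel)"
  proof (intro nn_integral_mono)
    fix t
    show "ennreal (psi u) * (ennreal (1 / psi t) * indicator ?S t) \<le> indicator {u..<r} t"
    proof (cases "t \<in> ?S")
      case True
      then have t: "t \<in> ivl R" "u \<le> t" "t < r" by auto
      have "psi u \<le> psi t" "0 < psi t" "0 < psi u"
        using t u quasiconcave_fn_pos[OF q] by (auto simp: ivl_def intro: quasiconcave_fn_mono[OF q])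
      then have "ennreal (psi u) * ennreal (1 / psi t) \<le> 1"
        by (simp flip: ennreal_mult add: ennreal_le_1)
      then show ?thesis using t by simp
    qed simp
  qed
  also have "\<dots> = ennreal (r - u)" using u by simp
  finally show ?thesis .
qed

lemma psi_mult_integral_inverse_psi_le:
  assumes q: "quasiconcave_fn R psi" and C: "0 < C"
    and CB: "\<And>a. a \<in> ivl R \<Longrightarrow>
      ennreal (psi a) * (\<integral>\<^sup>+ s\<in>{0<..<a}. ennreal (1 / psi s) \<partial>lborel) \<le> ennreal (C * a)"
    and u: "u \<in> ivl R" "u < r"
  shows "ennreal (psi u) * (\<integral>\<^sup>+ t\<in>{t \<in> ivl R. t < r}. ennreal (1 / psi t) \<partial>lborel) \<le> ennreal (max C 1 * r)"
proof -
  let ?E = "{t \<in> ivl R. t < r}" and ?S = "{t \<in> ivl R. u \<le> t \<and> t < r}"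
  have u0: "0 < u" using u by (simp add: ivl_def)
  \<comment> \<open>Split at \<open>u\<close>: the B-condition controls \<open>(0,u)\<close>, monotonicity of \<open>psi\<close> the rest.\<close>
  have "?S = ivl R \<inter> {u..<r}" by auto
  then have S: "?S \<subseteq> ivl R" "?S \<in> sets borel" by auto
  have "ennreal (1 / psi t) * indicator ?E t
      = ennreal (1 / psi t) * indicator {0<..<u} t + ennreal (1 / psi t) * indicator ?S t" for t
  proof (cases "t \<in> ivl R")
    case True
    then show ?thesis using u by (auto simp: indicator_def ivl_def)
  next
    case False
    then show ?thesis using greaterThanLessThan_subset_ivl[OF u(1)] by (auto simp: indicator_def)
  qed
  then have split_E: "(\<integral>\<^sup>+ t\<in>?E. ennreal (1 / psi t) \<partial>lborel)
      = (\<integral>\<^sup>+ t\<in>{0<..<u}. ennreal (1 / psi t) \<partial>lborel) + (\<integral>\<^sup>+ t\<in>?S. ennreal (1 / psi t) \<partial>lborel)"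
    using borel_measurable_inverse_quasiconcave[OF q greaterThanLessThan_subset_ivl[OF u(1)]]
      borel_measurable_inverse_quasiconcave[OF q S]
    by (simp add: nn_integral_add)
  have "ennreal (psi u) * (\<integral>\<^sup>+ t\<in>?E. ennreal (1 / psi t) \<partial>lborel) \<le> ennreal (C * u) + ennreal (r - u)"
    unfolding split_E distrib_left by (intro add_mono CB u(1) integral_inverse_psi_tail_le[OF q u])
  also have "\<dots> = ennreal (C * u + (r - u))" using C u0 u by (simp add: ennreal_plus)
  also have "\<dots> \<le> ennreal (max C 1 * r)"
  proof (rule ennreal_leI)
    have "C * u \<le> max C 1 * u" "r - u \<le> max C 1 * (r - u)"
      using u0 u by (auto intro: mult_right_mono simp: mult_le_cancel_right1)
    then show "C * u + (r - u) \<le> max C 1 * r" by (simp add: algebra_simps)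
  qed
  finally show ?thesis .
qed

lemma psi_sup_below_mult_integral_le:
  assumes q: "quasiconcave_fn R psi" and B: "B_condition R psi"
  obtains C where "\<And>\<delta>. psi_sup_below psi R \<delta> *
    (\<integral>\<^sup>+ t\<in>{t \<in> ivl R. ennreal t < \<delta>}. ennreal (1 / psi t) \<partial>lborel) \<le> ennreal C * \<delta>"
proof -
  obtain C where C: "0 < C" and CB: "\<And>a. a \<in> ivl R \<Longrightarrow>
      ennreal (psi a) * (\<integral>\<^sup>+ s\<in>{0<..<a}. ennreal (1 / psi s) \<partial>lborel) \<le> ennreal (C * a)"
    using B unfolding B_condition_iff[OF q] by blast
  have "psi_sup_below psi R \<delta> * (\<integral>\<^sup>+ t\<in>{t \<in> ivl R. ennreal t < \<delta>}. ennreal (1 / psi t) \<partial>lborel)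
      \<le> ennreal (max C 1) * \<delta>" for \<delta>
  proof (cases \<delta> rule: ennreal_cases)
    case (real r)
    have E_eq: "{t \<in> ivl R. ennreal t < \<delta>} = {t \<in> ivl R. t < r}"
      using real by (auto simp: ivl_def ennreal_less_iff)
    show ?thesis unfolding psi_sup_below_def E_eq SUP_mult_right_ennreal
    proof (rule SUP_least)
      fix u assume "u \<in> {t \<in> ivl R. t < r}"
      then have "ennreal (psi u) * (\<integral>\<^sup>+ t\<in>{t \<in> ivl R. t < r}. ennreal (1 / psi t) \<partial>lborel)
          \<le> ennreal (max C 1 * r)"
        by (intro psi_mult_integral_inverse_psi_le[OF q C CB]) auto
      then show "ennreal (psi u) * (\<integral>\<^sup>+ t\<in>{t \<in> ivl R. t < r}. ennreal (1 / psi t) \<partial>lborel)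
          \<le> ennreal (max C 1) * \<delta>"
        using real by (simp add: ennreal_mult)
    qed
  qed (simp add: ennreal_mult_top)
  then show ?thesis by (rule that)
qed

lemma Tpsi_le_level_integral:
  assumes q: "quasiconcave_fn R psi" and g[measurable]: "g \<in> borel_measurable lebesgue"
    and t: "t \<in> ivl R"
  shows "Tpsi psi R g t \<le> ennreal (1 / psi t) *
    (\<integral>\<^sup>+ y\<in>{y. 0 < y \<and> ennreal t < distf R g (ennreal y)}. psi_sup_below psi R (distf R g (ennreal y)) \<partial>lborel)"
  unfolding Tpsi_eq[OF q t]
proof (intro mult_left_mono SUP_least)
  fix s assume s: "s \<in> {s. t < s \<and> ereal s < R}"
  then have sI: "s \<in> ivl R" using t by (auto simp: ivl_def)
  let ?S = "{y. 0 < y \<and> ennreal s < distf R g (ennreal y)}"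
  have "ennreal (psi s) * rearr R g s \<le> ennreal (psi s) * (\<integral>\<^sup>+ y. indicator ?S y \<partial>lborel)"
    by (intro mult_left_mono rearr_le_level_integral) simp
  also have "\<dots> = (\<integral>\<^sup>+ y. ennreal (psi s) * indicator ?S y \<partial>lborel)"
    by (rule nn_integral_cmult[symmetric]) measurable
  also have "\<dots> \<le> (\<integral>\<^sup>+ y\<in>{y. 0 < y \<and> ennreal t < distf R g (ennreal y)}.
      psi_sup_below psi R (distf R g (ennreal y)) \<partial>lborel)"
  proof (intro nn_integral_mono)
    fix y
    show "ennreal (psi s) * indicator ?S y \<le> psi_sup_below psi R (distf R g (ennreal y)) *
        indicator {y. 0 < y \<and> ennreal t < distf R g (ennreal y)} y"
    proof (cases "y \<in> ?S")
      case True
      then have "ennreal (psi s) \<le> psi_sup_below psi R (distf R g (ennreal y))"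
        unfolding psi_sup_below_def using sI by (intro SUP_upper) auto
      moreover have "ennreal t < ennreal s" using s t by (intro ennreal_lessI) (auto simp: ivl_def)
      then have "ennreal t < distf R g (ennreal y)" using True by (blast intro: order.strict_trans)
      ultimately show ?thesis using True by simp
    qed simp
  qed
  finally show "ennreal (psi s) * rearr R g s \<le> \<dots>" .
qed simp

lemma L1norm_Tpsi_le_level_integral:
  assumes q: "quasiconcave_fn R psi" and g[measurable]: "g \<in> borel_measurable lebesgue"
  shows "L1norm R (Tpsi psi R g) \<le> (\<integral>\<^sup>+ y\<in>{0<..}. psi_sup_below psi R (distf R g (ennreal y)) *
    (\<integral>\<^sup>+ t\<in>{t \<in> ivl R. ennreal t < distf R g (ennreal y)}. ennreal (1 / psi t) \<partial>lborel) \<partial>lborel)"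
proof -
  define d where "d y = distf R g (ennreal y)" for y
  define K where "K y = psi_sup_below psi R (d y)" for y
  have [measurable]: "d \<in> borel_measurable borel" unfolding d_def by measurable
  have [measurable]: "K \<in> borel_measurable borel" unfolding K_def d_def
    by (rule borel_measurable_antitone) (auto intro!: psi_sup_below_mono distf_antitone ennreal_leI)
  have [measurable]: "(\<lambda>t. ennreal (1 / psi t) * indicator (ivl R) t) \<in> borel_measurable borel"
    by (rule borel_measurable_inverse_quasiconcave[OF q]) auto
  define F where "F t y = ennreal (1 / psi t) * indicator (ivl R) t * (K y * of_bool (0 < y \<and> ennreal t < d y))"
    for t y
  have [measurable]: "case_prod F \<in> borel_measurable (lborel \<Otimes>\<^sub>M lborel)" unfolding F_def by measurable
  have "Tpsi psi R g t * indicator (ivl R) t \<le> (\<integral>\<^sup>+ y. F t y \<partial>lborel)" for t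
  proof (cases "t \<in> ivl R")
    case True
    then have "(\<integral>\<^sup>+ y. F t y \<partial>lborel)
        = (\<integral>\<^sup>+ y. ennreal (1 / psi t) * (K y * of_bool (0 < y \<and> ennreal t < d y)) \<partial>lborel)"
      by (simp add: F_def)
    also have "\<dots> = ennreal (1 / psi t) * (\<integral>\<^sup>+ y. K y * of_bool (0 < y \<and> ennreal t < d y) \<partial>lborel)"
      by (rule nn_integral_cmult) measurable
    finally show ?thesis using Tpsi_le_level_integral[OF q g True] True
      by (simp add: K_def d_def indicator_def)
  qed (simp add: F_def)
  then have "L1norm R (Tpsi psi R g) \<le> (\<integral>\<^sup>+ t. (\<integral>\<^sup>+ y. F t y \<partial>lborel) \<partial>lebesgue)"
    unfolding L1norm_def by (rule nn_integral_mono)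
  also have "\<dots> = (\<integral>\<^sup>+ t. (\<integral>\<^sup>+ y. F t y \<partial>lborel) \<partial>lborel)"
    by (rule nn_integral_completion) measurable
  also have "\<dots> = (\<integral>\<^sup>+ y. (\<integral>\<^sup>+ t. F t y \<partial>lborel) \<partial>lborel)"
    by (rule lborel_pair.Fubini'[symmetric]) measurable
  also have "\<dots> = (\<integral>\<^sup>+ y\<in>{0<..}. K y * (\<integral>\<^sup>+ t\<in>{t \<in> ivl R. ennreal t < d y}. ennreal (1 / psi t) \<partial>lborel) \<partial>lborel)"
  proof (intro nn_integral_cong)
    fix y
    let ?E = "{t \<in> ivl R. ennreal t < d y}"
    have "?E = ivl R \<inter> {t. ennreal t < d y}" by auto
    then have E: "?E \<subseteq> ivl R" "?E \<in> sets borel" by auto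
    have "(\<integral>\<^sup>+ t. F t y \<partial>lborel)
        = (\<integral>\<^sup>+ t. K y * indicator {0<..} y * (ennreal (1 / psi t) * indicator ?E t) \<partial>lborel)"
      by (intro nn_integral_cong) (simp add: F_def indicator_def ac_simps)
    also have "\<dots> = K y * (\<integral>\<^sup>+ t\<in>?E. ennreal (1 / psi t) \<partial>lborel) * indicator {0<..} y"
      using borel_measurable_inverse_quasiconcave[OF q E] by (simp add: nn_integral_cmult ac_simps)
    finally show "(\<integral>\<^sup>+ t. F t y \<partial>lborel) = \<dots>" .
  qed
  finally show ?thesis by (simp only: K_def d_def)
qed

lemma L1norm_Tpsi_le:
  assumes q: "quasiconcave_fn R psi" and B: "B_condition R psi"
  obtains C where "\<And>g. g \<in> borel_measurable lebesgue \<Longrightarrow> L1norm R (Tpsi psi R g) \<le> ennreal C * L1norm R g"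
proof -
  obtain C where C: "\<And>\<delta>. psi_sup_below psi R \<delta> *
      (\<integral>\<^sup>+ t\<in>{t \<in> ivl R. ennreal t < \<delta>}. ennreal (1 / psi t) \<partial>lborel) \<le> ennreal C * \<delta>"
    using psi_sup_below_mult_integral_le[OF q B] by blast
  have "L1norm R (Tpsi psi R g) \<le> ennreal C * L1norm R g" if g[measurable]: "g \<in> borel_measurable lebesgue" for g
  proof -
    note L1norm_Tpsi_le_level_integral[OF q g]
    also have "(\<integral>\<^sup>+ y\<in>{0<..}. psi_sup_below psi R (distf R g (ennreal y)) *
        (\<integral>\<^sup>+ t\<in>{t \<in> ivl R. ennreal t < distf R g (ennreal y)}. ennreal (1 / psi t) \<partial>lborel) \<partial>lborel)
      \<le> (\<integral>\<^sup>+ y\<in>{0<..}. ennreal C * distf R g (ennreal y) \<partial>lborel)"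
      by (intro nn_integral_mono mult_right_mono C) simp
    also have "\<dots> = ennreal C * L1norm R g"
      by (simp add: L1norm_eq_distf_integral[OF g] nn_integral_cmult mult.assoc)
    finally show ?thesis .
  qed
  then show ?thesis by (rule that)
qed

section \<open>Necessity of the B-condition\<close>

lemma ennreal_abs_indicator: "(\<lambda>x. ennreal \<bar>indicator A x :: real\<bar>) = indicator A"
  by (auto simp: indicator_def)

lemma rearr_indicator:
  assumes b: "b \<in> ivl R" and s: "s \<in> ivl R"
  shows "rearr R (indicator {0<..<b}) s = indicator {0<..<b} s"
proof -
  let ?g = "indicator {0<..<b} :: real \<Rightarrow> ennreal"
  have anti: "\<And>x y. x \<in> ivl R \<Longrightarrow> y \<in> ivl R \<Longrightarrow> x \<le> y \<Longrightarrow> ?g y \<le> ?g x"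
    by (auto simp: indicator_def ivl_def)
  have le: "rearr R ?g s \<le> ?g s" by (rule rearr_le_of_antitone[OF anti s])
  show ?thesis
  proof (cases "s < b")
    case True
    have s0: "0 < s" using s by (simp add: ivl_def)
    have "(s + b) / 2 \<in> ivl R" using True s0 by (intro ivl_downward_closed[OF b]) auto
    then have "?g ((s + b) / 2) \<le> rearr R ?g s" using True by (intro le_rearr_of_antitone[OF anti]) auto
    then show ?thesis using le True s0 by (simp add: indicator_def)
  next
    case False
    then show ?thesis using le by (simp add: indicator_def)
  qed
qed

lemma L1norm_indicator: "b \<in> ivl R \<Longrightarrow> L1norm R (indicator {0<..<b}) = ennreal b"
  using greaterThanLessThan_subset_ivl[of b R]
  by (simp add: L1norm_def indicator_inter_arith[symmetric] Int_absorb2 emeasure_lebesgue_borel ivl_def)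

lemma Mnorm_indicator_le:
  assumes q: "quasiconcave_fn R psi" and b: "b \<in> ivl R"
  shows "Mnorm psi R (indicator {0<..<b}) \<le> ennreal (psi b)"
  unfolding Mnorm_def
proof (rule SUP_least)
  fix s assume s: "s \<in> ivl R"
  have pos: "0 < s" "0 < b" "0 < psi s" using s b quasiconcave_fn_pos[OF q s] by (auto simp: ivl_def)
  have "(\<integral>\<^sup>+ u\<in>{0<..<s}. rearr R (indicator {0<..<b}) u \<partial>lborel)
      = (\<integral>\<^sup>+ u. indicator {0<..<min s b} u \<partial>lborel)"
    using greaterThanLessThan_subset_ivl[OF s]
    by (intro nn_integral_cong) (auto simp: rearr_indicator[OF b] indicator_def)
  also have "\<dots> = ennreal (min s b)" using pos by simp
  finally have "ennreal (psi s) * dblstar R (indicator {0<..<b}) s = ennreal (psi s * (1 / s) * min s b)"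
    unfolding dblstar_def using pos by (simp add: mult.assoc[symmetric] flip: ennreal_mult)
  also have "\<dots> \<le> ennreal (psi b)"
  proof (rule ennreal_leI, cases "s \<le> b")
    case True
    then show "psi s * (1 / s) * min s b \<le> psi b"
      using quasiconcave_fn_mono[OF q b pos(1)] pos by (simp add: min_def)
  next
    case False
    then have "psi s * b \<le> psi b * s" using quasiconcave_fn_ratio[OF q s pos(2)] by simp
    then show "psi s * (1 / s) * min s b \<le> psi b" using False pos by (simp add: min_def field_simps)
  qed
  finally show "ennreal (psi s) * dblstar R (indicator {0<..<b}) s \<le> ennreal (psi b)" .
qed

lemma Tpsi_indicator_ge:
  assumes q: "quasiconcave_fn R psi" and a: "a \<in> ivl R" and b: "b \<in> ivl R" "a < b"
    and t: "0 < t" "t < a"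
  shows "ennreal (psi a / psi t) \<le> Tpsi psi R (indicator {0<..<b}) t"
proof -
  have tI: "t \<in> ivl R" using t by (intro ivl_downward_closed[OF a]) auto
  have "ennreal (psi a) = ennreal (psi a) * rearr R (indicator {0<..<b}) a"
    using a b by (simp add: rearr_indicator ivl_def)
  also have "\<dots> \<le> (SUP s \<in> {s. t < s \<and> ereal s < R}. ennreal (psi s) * rearr R (indicator {0<..<b}) s)"
    by (rule SUP_upper) (use a t in \<open>auto simp: ivl_def\<close>)
  finally have "ennreal (1 / psi t) * ennreal (psi a) \<le> Tpsi psi R (indicator {0<..<b}) t"
    unfolding Tpsi_eq[OF q tI] by (rule mult_left_mono) simp
  then show ?thesis
    using quasiconcave_fn_pos[OF q tI] quasiconcave_fn_pos[OF q a] by (simp flip: ennreal_mult)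
qed

lemma L1norm_Tpsi_indicator_ge:
  assumes q: "quasiconcave_fn R psi" and a: "a \<in> ivl R" and b: "b \<in> ivl R" "a < b"
  shows "ennreal (psi a) * (\<integral>\<^sup>+ s\<in>{0<..<a}. ennreal (1 / psi s) \<partial>lborel)
    \<le> L1norm R (Tpsi psi R (indicator {0<..<b}))"
proof -
  have meas: "(\<lambda>s. ennreal (1 / psi s) * indicator {0<..<a} s) \<in> borel_measurable borel"
    by (rule borel_measurable_inverse_quasiconcave[OF q greaterThanLessThan_subset_ivl[OF a]]) simp
  have "ennreal (psi a / psi s) * indicator {0<..<a} s
      = ennreal (psi a) * (ennreal (1 / psi s) * indicator {0<..<a} s)" for s
    using quasiconcave_fn_pos[OF q a] by (simp add: ennreal_mult'[symmetric] mult.assoc[symmetric])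
  with meas have "ennreal (psi a) * (\<integral>\<^sup>+ s\<in>{0<..<a}. ennreal (1 / psi s) \<partial>lborel)
      = (\<integral>\<^sup>+ s. ennreal (psi a / psi s) * indicator {0<..<a} s \<partial>lebesgue)"
    by (simp add: nn_integral_completion nn_integral_cmult)
  also have "\<dots> \<le> (\<integral>\<^sup>+ s. Tpsi psi R (indicator {0<..<b}) s * indicator (ivl R) s \<partial>lebesgue)"
    using Tpsi_indicator_ge[OF q a b] greaterThanLessThan_subset_ivl[OF a]
    by (intro nn_integral_mono) (auto simp: indicator_def)
  finally show ?thesis by (simp add: L1norm_def)
qed

lemma B_condition_if_L1_bounded:
  assumes q: "quasiconcave_fn R psi"
    and bounded: "\<forall>f::real \<Rightarrow> real. f \<in> borel_measurable lebesgue \<longrightarrow>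
      L1norm R (\<lambda>x. ennreal \<bar>f x\<bar>) < \<infinity> \<longrightarrow>
      L1norm R (Tpsi psi R (\<lambda>x. ennreal \<bar>f x\<bar>)) \<le> ennreal C * L1norm R (\<lambda>x. ennreal \<bar>f x\<bar>)"
  shows "B_condition R psi"
  unfolding B_condition_iff[OF q]
proof (intro exI conjI ballI)
  show "0 < 2 * max C 1" by simp
  fix a assume a: "a \<in> ivl R"
  obtain b where b: "b \<in> ivl R" "a < b" "b \<le> 2 * a" using ivl_doubling_point[OF a] .
  have "ennreal (psi a) * (\<integral>\<^sup>+ s\<in>{0<..<a}. ennreal (1 / psi s) \<partial>lborel)
      \<le> L1norm R (Tpsi psi R (indicator {0<..<b}))"
    by (rule L1norm_Tpsi_indicator_ge[OF q a b(1,2)])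
  also have "\<dots> \<le> ennreal C * ennreal b"
    using bounded[rule_format, of "indicator {0<..<b}", unfolded ennreal_abs_indicator] L1norm_indicator[OF b(1)]
    by (simp add: borel_measurable_indicator)
  also have "\<dots> \<le> ennreal (max C 1) * ennreal (2 * a)"
    using b by (intro mult_mono ennreal_leI) auto
  also have "\<dots> = ennreal (2 * max C 1 * a)" by (simp add: ennreal_mult'[symmetric] ac_simps)
  finally show "ennreal (psi a) * (\<integral>\<^sup>+ s\<in>{0<..<a}. ennreal (1 / psi s) \<partial>lborel)
      \<le> ennreal (2 * max C 1 * a)" .
qed

lemma rearr_Tpsi_indicator_ge:
  assumes q: "quasiconcave_fn R psi" and a: "a \<in> ivl R" and b: "b \<in> ivl R" "a < b"
    and s: "0 < s" "s < a"
  shows "ennreal (psi a / (2 * psi s)) \<le> rearr R (Tpsi psi R (indicator {0<..<b})) s"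
proof -
  define t where "t = (s + min (2 * s) a) / 2"
  have t: "s < t" "t < a" "t \<le> 2 * s" using s by (auto simp: t_def min_def)
  have tI: "t \<in> ivl R" and sI: "s \<in> ivl R" using t s by (auto intro: ivl_downward_closed[OF a])
  have pos: "0 < psi s" "0 < psi t" "0 < psi a"
    using quasiconcave_fn_pos[OF q] sI tI a by auto
  have "psi t * s \<le> psi s * t" using t s by (intro quasiconcave_fn_ratio[OF q tI]) auto
  also have "\<dots> \<le> (2 * psi s) * s" using t pos by simp
  finally have "psi t \<le> 2 * psi s" using s by simp
  then have "ennreal (psi a / (2 * psi s)) \<le> ennreal (psi a / psi t)"
    using pos by (intro ennreal_leI divide_left_mono) auto
  also have "\<dots> \<le> Tpsi psi R (indicator {0<..<b}) t"
    using t s by (intro Tpsi_indicator_ge[OF q a b]) auto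
  also have "\<dots> \<le> rearr R (Tpsi psi R (indicator {0<..<b})) s"
    by (rule le_rearr_of_antitone[OF Tpsi_antitone[OF q] tI t(1)])
  finally show ?thesis .
qed

lemma Mnorm_Tpsi_indicator_ge:
  assumes q: "quasiconcave_fn R psi" and a: "a \<in> ivl R" and b: "b \<in> ivl R" "a < b"
  shows "ennreal (psi a / (2 * a)) * (ennreal (psi a) * (\<integral>\<^sup>+ s\<in>{0<..<a}. ennreal (1 / psi s) \<partial>lborel))
    \<le> Mnorm psi R (Tpsi psi R (indicator {0<..<b}))"
proof -
  have a0: "0 < a" and pa: "0 < psi a" using a quasiconcave_fn_pos[OF q a] by (auto simp: ivl_def)
  let ?T = "Tpsi psi R (indicator {0<..<b})"
  let ?X = "\<integral>\<^sup>+ s\<in>{0<..<a}. ennreal (1 / psi s) \<partial>lborel"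
  have "ennreal (psi a / 2) * ?X
      = (\<integral>\<^sup>+ s. ennreal (psi a / 2) * (ennreal (1 / psi s) * indicator {0<..<a} s) \<partial>lborel)"
    using borel_measurable_inverse_quasiconcave[OF q greaterThanLessThan_subset_ivl[OF a]]
    by (simp add: nn_integral_cmult)
  also have "\<dots> \<le> (\<integral>\<^sup>+ s\<in>{0<..<a}. rearr R ?T s \<partial>lborel)"
  proof (intro nn_integral_mono)
    fix s
    show "ennreal (psi a / 2) * (ennreal (1 / psi s) * indicator {0<..<a} s) \<le> rearr R ?T s * indicator {0<..<a} s"
    proof (cases "s \<in> {0<..<a}")
      case True
      then show ?thesis using rearr_Tpsi_indicator_ge[OF q a b, of s] pa
        by (simp add: ennreal_mult'[symmetric])
    qed simp
  qed
  finally have "ennreal (psi a) * (ennreal (1 / a) * (ennreal (psi a / 2) * ?X)) \<le> ennreal (psi a) * dblstar R ?T a"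
    unfolding dblstar_def by (intro mult_left_mono) auto
  also have "\<dots> \<le> Mnorm psi R ?T" unfolding Mnorm_def using a by (rule SUP_upper)
  finally have "ennreal (psi a) * (ennreal (1 / a) * (ennreal (psi a / 2) * ?X)) \<le> Mnorm psi R ?T" .
  moreover have "ennreal (psi a) * ennreal (1 / a) * ennreal (psi a / 2)
      = ennreal (psi a / (2 * a)) * ennreal (psi a)"
    using a0 pa by (simp flip: ennreal_mult add: field_simps)
  ultimately show ?thesis by (metis mult.assoc)
qed

lemma B_condition_if_M_bounded:
  assumes q: "quasiconcave_fn R psi"
    and bounded: "\<forall>f::real \<Rightarrow> real. f \<in> borel_measurable lebesgue \<longrightarrow>
      Mnorm psi R (\<lambda>x. ennreal \<bar>f x\<bar>) < \<infinity> \<longrightarrow>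
      Mnorm psi R (Tpsi psi R (\<lambda>x. ennreal \<bar>f x\<bar>)) \<le> ennreal C * Mnorm psi R (\<lambda>x. ennreal \<bar>f x\<bar>)"
  shows "B_condition R psi"
  unfolding B_condition_iff[OF q]
proof (intro exI conjI ballI)
  show "0 < 4 * max C 1" by simp
  fix a assume a: "a \<in> ivl R"
  obtain b where b: "b \<in> ivl R" "a < b" "b \<le> 2 * a" using ivl_doubling_point[OF a] .
  have a0: "0 < a" and pa: "0 < psi a" using a quasiconcave_fn_pos[OF q a] by (auto simp: ivl_def)
  let ?X = "\<integral>\<^sup>+ s\<in>{0<..<a}. ennreal (1 / psi s) \<partial>lborel"
  have "psi b * a \<le> psi a * b" using a0 b by (intro quasiconcave_fn_ratio[OF q b(1)]) auto
  also have "\<dots> \<le> (2 * psi a) * a" using b pa by simp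
  finally have "psi b \<le> 2 * psi a" using a0 by simp
  then have M1: "Mnorm psi R (indicator {0<..<b}) \<le> ennreal (2 * psi a)"
    using Mnorm_indicator_le[OF q b(1)] by (meson ennreal_leI order_trans)
  have "ennreal (psi a / (2 * a)) * (ennreal (psi a) * ?X) \<le> Mnorm psi R (Tpsi psi R (indicator {0<..<b}))"
    by (rule Mnorm_Tpsi_indicator_ge[OF q a b(1,2)])
  also have "\<dots> \<le> ennreal C * Mnorm psi R (indicator {0<..<b})"
    using bounded[rule_format, of "indicator {0<..<b}", unfolded ennreal_abs_indicator] M1
    by (simp add: borel_measurable_indicator le_less_trans[OF _ ennreal_less_top])
  also have "\<dots> \<le> ennreal (max C 1) * ennreal (2 * psi a)" by (intro mult_mono ennreal_leI M1) auto
  also have "\<dots> = ennreal (psi a / (2 * a)) * ennreal (4 * max C 1 * a)"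
    using a0 pa by (simp flip: ennreal_mult add: field_simps)
  finally show "ennreal (psi a) * ?X \<le> ennreal (4 * max C 1 * a)"
    using a0 pa by (simp add: ennreal_mult_le_mult_iff)
qed

theorem lemma3p1:
  fixes R :: ereal and psi :: "real \<Rightarrow> real"
  assumes "0 < R" and "quasiconcave_fn R psi"
  shows "((\<exists>C::real. \<forall>f::real \<Rightarrow> real. f \<in> borel_measurable lebesgue \<longrightarrow>
              L1norm R (\<lambda>x. ennreal \<bar>f x\<bar>) < \<infinity> \<longrightarrow>
              L1norm R (Tpsi psi R (\<lambda>x. ennreal \<bar>f x\<bar>)) \<le> ennreal C * L1norm R (\<lambda>x. ennreal \<bar>f x\<bar>))
          \<longleftrightarrow> B_condition R psi)
       \<and> ((\<exists>C::real. \<forall>f::real \<Rightarrow> real. f \<in> borel_measurable lebesgue \<longrightarrow>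
              Mnorm psi R (\<lambda>x. ennreal \<bar>f x\<bar>) < \<infinity> \<longrightarrow>
              Mnorm psi R (Tpsi psi R (\<lambda>x. ennreal \<bar>f x\<bar>)) \<le> ennreal C * Mnorm psi R (\<lambda>x. ennreal \<bar>f x\<bar>))
          \<longleftrightarrow> B_condition R psi)"
    (is "(?L1_bounded \<longleftrightarrow> ?B) \<and> (?M_bounded \<longleftrightarrow> ?B)")
proof -
  note q = assms(2)
  have "?L1_bounded \<longleftrightarrow> ?B"
  proof
    show ?B if ?L1_bounded
      using that by (elim exE) (rule B_condition_if_L1_bounded[OF q])
  next
    assume ?B
    then obtain C where "\<And>g. g \<in> borel_measurable lebesgue \<Longrightarrow> L1norm R (Tpsi psi R g) \<le> ennreal C * L1norm R g"
      using L1norm_Tpsi_le[OF q] by blast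
    then show ?L1_bounded by (intro exI[of _ C] allI impI) simp
  qed
  moreover have "?M_bounded \<longleftrightarrow> ?B"
  proof
    show ?B if ?M_bounded
      using that by (elim exE) (rule B_condition_if_M_bounded[OF q])
  next
    assume ?B
    then obtain C where "\<And>g. Mnorm psi R (Tpsi psi R g) \<le> ennreal C * Mnorm psi R g"
      using Mnorm_Tpsi_le[OF q] by blast
    then show ?M_bounded by (intro exI[of _ C] allI impI) simp
  qed
  ultimately show ?thesis ..
qed

end
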